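(* For every $n\ge1$, almost surely, $\mathbf W^{2n,\uparrow}$ and $\mathbf W^{2n,\downarrow}$ each contain a unique bi-infinite path.
   Context: For $n\ge1$, $\mathsf{Cyl}^\uparrow_{2n}=\{(x,t):x\in\mathbb Z/2n\mathbb Z,t\in\mathbb Z,x-t\equiv0\ (\mathrm{mod}\ 2)\}$, $\mathsf{Cyl}^\downarrow_{2n}=\{(x,t):x-t\equiv1\ (\mathrm{mod}\ 2)\}$. Let $(\xi(w))_{w\in\mathsf{Cyl}^\uparrow_{2n}}$ be i.i.d. with $\mathbb P(\xi=1)=\mathbb P(\xi=-1)=1/2$. The cylindric lattice web $\mathbf W^{2n,\uparrow}$ consists of the walks $\mathbf W^{2n,\uparrow}_{(x,t)}(t)=x$, $\mathbf W^{2n,\uparrow}_{(x,t)}(s)=\mathbf W^{2n,\uparrow}_{(x,t)}(s-1)+\xi(\mathbf W^{2n,\uparrow}_{(x,t)}(s-1),s-1)\bmod 2n$ for integers $s>t$, $(x,t)\in\mathsf{Cyl}^\uparrow_{2n}$; equivalently its edge set is $\{(w,w+(\xi(w),1)):w\in\mathsf{Cyl}^\uparrow_{2n}\}$. Its dual $\mathbf W^{2n,\downarrow}$ consists of the walks $\mathbf W^{2n,\downarrow}_{(x,t)}(t)=x$, $\mathbf W^{2n,\downarrow}_{(x,t)}(s)=\mathbf W^{2n,\downarrow}_{(x,t)}(s+1)-\xi(\mathbf W^{2n,\downarrow}_{(x,t)}(s+1),s)\bmod 2n$ for integers $s<t$, $(x,t)\in\mathsf{Cyl}^\downarrow_{2n}$.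 For $D\in\{\uparrow,\downarrow\}$, a bi-infinite path of $\mathsf{Cyl}^D_{2n}$ is a sequence $(x_i,i)_{i\in\mathbb Z}\subset\mathsf{Cyl}^D_{2n}$ with $x_i-x_{i-1}\bmod 2n\in\{1,2n-1\}$ for all $i$; $\mathbf W^{2n,D}$ contains it if all its edges are edges of $\mathbf W^{2n,D}$. *)

theory Defs
  imports "HOL-Probability.Probability"
begin

text \<open>Points of the cylinder Z/2nZ x Z are encoded as pairs (x,t) of integers with
  0 <= x < 2n (canonical representatives of Z/2nZ).\<close>

definition cyl_up :: "nat \<Rightarrow> (int \<times> int) set" where
  "cyl_up n = {(x, t). 0 \<le> x \<and> x < 2 * int n \<and> even (x - t)}"

definition cyl_down :: "nat \<Rightarrow> (int \<times> int) set" where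
  "cyl_down n = {(x, t). 0 \<le> x \<and> x < 2 * int n \<and> odd (x - t)}"

definition xi_space :: "nat \<Rightarrow> ((int \<times> int) \<Rightarrow> int) measure" where
  "xi_space n = PiM (cyl_up n) (\<lambda>_. measure_pmf (pmf_of_set {-1, 1 :: int}))"

definition web_up_edges :: "nat \<Rightarrow> ((int \<times> int) \<Rightarrow> int) \<Rightarrow> ((int \<times> int) \<times> (int \<times> int)) set" where
  "web_up_edges n \<xi> =
     {((x, t), ((x + \<xi> (x, t)) mod (2 * int n), t + 1)) | x t. (x, t) \<in> cyl_up n}"

definition web_down_edges :: "nat \<Rightarrow> ((int \<times> int) \<Rightarrow> int) \<Rightarrow> ((int \<times> int) \<times> (int \<times> int)) set" where
  "web_down_edges n \<xi> =
     {((x, t), ((x - \<xi> (x, t - 1)) mod (2 * int n), t - 1)) | x t. (x, t) \<in> cyl_down n}"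

definition bi_infinite_path :: "nat \<Rightarrow> (int \<times> int) set \<Rightarrow> (int \<Rightarrow> int) \<Rightarrow> bool" where
  "bi_infinite_path n C p \<longleftrightarrow>
     (\<forall>i. (p i, i) \<in> C) \<and>
     (\<forall>i. (p i - p (i - 1)) mod (2 * int n) \<in> {1, 2 * int n - 1})"

definition up_web_contains :: "nat \<Rightarrow> ((int \<times> int) \<Rightarrow> int) \<Rightarrow> (int \<Rightarrow> int) \<Rightarrow> bool" where
  "up_web_contains n \<xi> p \<longleftrightarrow>
     bi_infinite_path n (cyl_up n) p \<and>
     (\<forall>i. ((p (i - 1), i - 1), (p i, i)) \<in> web_up_edges n \<xi>)"

definition down_web_contains :: "nat \<Rightarrow> ((int \<times> int) \<Rightarrow> int) \<Rightarrow> (int \<Rightarrow> int) \<Rightarrow> bool" where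
  "down_web_contains n \<xi> p \<longleftrightarrow>
     bi_infinite_path n (cyl_down n) p \<and>
     (\<forall>i. ((p i, i), (p (i - 1), i - 1)) \<in> web_down_edges n \<xi>)"

end

theory Submission
  imports Defs
begin

text \<open>On each time slice the walkers of either web occupy the \<open>n\<close> positions of one parity in
  \<open>\<int>/2n\<int>\<close>, and a bi-infinite path is a bi-infinite orbit of the resulting time-dependent map
  (run backwards in time for the dual web). If during \<open>n + 1\<close> consecutive times \<open>\<xi>\<close> pushes every
  position towards \<open>0\<close>, all walkers started before that window end in \<open>{0, 1}\<close>, hence, by parity,
  at one point: the flow coalesces. Coalescing windows before every time force uniqueness of the
  orbit, and the flows from ever earlier starting times define it (coupling from the past).
  Disjoint windows see independent parts of \<open>\<xi>\<close> and each has the required pattern with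
  probability at least \<open>2 ^ (-2n(n + 1))\<close>, so almost surely they occur before (and, for the dual web, after) every time.\<close>

section \<open>Coalescing time-dependent flows\<close>

fun flow :: "(int \<Rightarrow> 'a \<Rightarrow> 'a) \<Rightarrow> int \<Rightarrow> nat \<Rightarrow> 'a \<Rightarrow> 'a" where
  "flow g s 0 x = x"
| "flow g s (Suc k) x = g (s + int k) (flow g s k x)"

definition orbit :: "(int \<Rightarrow> 'a set) \<Rightarrow> (int \<Rightarrow> 'a \<Rightarrow> 'a) \<Rightarrow> (int \<Rightarrow> 'a) \<Rightarrow> bool" where
  "orbit V g p \<longleftrightarrow> (\<forall>t. p t \<in> V t) \<and> (\<forall>t. p (t + 1) = g t (p t))"

definition coalesces :: "(int \<Rightarrow> 'a \<Rightarrow> 'a) \<Rightarrow> (int \<Rightarrow> 'a set) \<Rightarrow> int \<Rightarrow> nat \<Rightarrow> bool" where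
  "coalesces g V s k \<longleftrightarrow> (\<forall>x\<in>V s. \<forall>y\<in>V s. flow g s k x = flow g s k y)"

lemma flow_add: "flow g s (a + b) x = flow g (s + int a) b (flow g s a x)"
  by (induction b) (auto simp: algebra_simps)

lemma flow_in:
  assumes maps: "\<And>t x. x \<in> V t \<Longrightarrow> g t x \<in> V (t + 1)" and "x \<in> V s"
  shows "flow g s k x \<in> V (s + int k)"
proof (induction k)
  case 0
  then show ?case using \<open>x \<in> V s\<close> by simp
next
  case (Suc k)
  then show ?case using maps[OF Suc] by (simp add: ac_simps)
qed

lemma orbit_eq_flow:
  assumes "orbit V g p"
  shows "p (s + int k) = flow g s k (p s)"
proof (induction k)
  case (Suc k)
  have "p (s + int k + 1) = g (s + int k) (p (s + int k))"
    using assms unfolding orbit_def by blast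
  then show ?case using Suc by (simp add: ac_simps)
qed simp

lemma flow_eq_after_coalescence:
  assumes maps: "\<And>t x. x \<in> V t \<Longrightarrow> g t x \<in> V (t + 1)"
    and coal: "coalesces g V s k" and "s + int k \<le> t" and "s' \<le> s"
    and x: "x \<in> V s'" and y: "y \<in> V s"
  shows "flow g s' (nat (t - s')) x = flow g s (nat (t - s)) y"
proof -
  have same_end: "flow g s (nat (t - s)) z = flow g s (nat (t - s)) y" if z: "z \<in> V s" for z
  proof -
    have split: "nat (t - s) = k + nat (t - s - int k)" using \<open>s + int k \<le> t\<close> by simp
    have "flow g s k z = flow g s k y" using coal z y unfolding coalesces_def by blast
    then show ?thesis by (subst (1 2) split) (simp only: flow_add)
  qed
  have split': "nat (t - s') = nat (s - s') + nat (t - s)" and s: "s' + int (nat (s - s')) = s"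
    using assms(3,4) by simp_all
  have "flow g s' (nat (t - s')) x = flow g s (nat (t - s)) (flow g s' (nat (s - s')) x)"
    by (subst split') (simp only: flow_add s)
  moreover have "flow g s' (nat (s - s')) x \<in> V s"
    using flow_in[of V g, OF maps x, where k = "nat (s - s')"] s by simp
  ultimately show ?thesis using same_end by simp
qed

lemma orbit_exists_if_coalescing:
  assumes maps: "\<And>t x. x \<in> V t \<Longrightarrow> g t x \<in> V (t + 1)"
    and nonempty: "\<And>t. V t \<noteq> {}"
    and coalescing: "\<And>t. \<exists>s k. s + int k \<le> t \<and> coalesces g V s k"
  shows "\<exists>p. orbit V g p"
proof -
  obtain S :: "int \<Rightarrow> int" and K :: "int \<Rightarrow> nat"
    where SK: "\<And>t. S t + int (K t) \<le> t \<and> coalesces g V (S t) (K t)"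
    using coalescing by metis
  define x0 where "x0 t = (SOME x. x \<in> V t)" for t
  have x0: "x0 t \<in> V t" for t unfolding x0_def using nonempty[of t] by (simp add: some_in_eq)
  define p where "p t = flow g (S t) (nat (t - S t)) (x0 (S t))" for t
  have p_eq: "p t = flow g m (nat (t - m)) x" if "m \<le> S t" "x \<in> V m" for t m x
    unfolding p_def using flow_eq_after_coalescence[OF maps SK[THEN conjunct2] SK[THEN conjunct1] that x0]
    by simp
  have "p t \<in> V t" for t
    using flow_in[of V g, OF maps x0, of "S t" "nat (t - S t)"] SK[of t] unfolding p_def by simp
  moreover have "p (t + 1) = g t (p t)" for t
  proof -
    define m where "m = min (S t) (S (t + 1))"
    have m: "m \<le> S t" "m \<le> S (t + 1)" "m \<le> t" using SK[of t] unfolding m_def by auto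
    have "nat (t + 1 - m) = Suc (nat (t - m))" "m + int (nat (t - m)) = t" using m by simp_all
    then show ?thesis using p_eq[OF m(2) x0] p_eq[OF m(1) x0] by simp
  qed
  ultimately show ?thesis unfolding orbit_def by blast
qed

lemma orbit_unique_if_coalescing:
  assumes coalescing: "\<And>t. \<exists>s k. s + int k \<le> t \<and> coalesces g V s k"
    and "orbit V g p" and "orbit V g q"
  shows "p = q"
proof
  fix t
  obtain s k where sk: "s + int k \<le> t" "coalesces g V s k" using coalescing by blast
  have "p (s + int k) = q (s + int k)"
    using sk(2) assms(2,3) unfolding orbit_eq_flow[OF assms(2)] orbit_eq_flow[OF assms(3)]
    by (auto simp: orbit_def coalesces_def)
  then have "p (s + int k + int j) = q (s + int k + int j)" for j
    by (simp add: orbit_eq_flow[OF assms(2)] orbit_eq_flow[OF assms(3)])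
  from this[of "nat (t - s - int k)"] show "p t = q t" using sk(1) by simp
qed

lemma ex1_orbit_if_coalescing:
  assumes "\<And>t x. x \<in> V t \<Longrightarrow> g t x \<in> V (t + 1)" and "\<And>t. V t \<noteq> {}"
    and "\<And>t. \<exists>s k. s + int k \<le> t \<and> coalesces g V s k"
  shows "\<exists>!p. orbit V g p"
  using orbit_exists_if_coalescing[OF assms] orbit_unique_if_coalescing[OF assms(3)] by blast

section \<open>Stepping towards zero on \<open>\<int>/2n\<int>\<close>\<close>

definition parity_slice :: "nat \<Rightarrow> int \<Rightarrow> int \<Rightarrow> int set" where
  "parity_slice n b t = {x. 0 \<le> x \<and> x < 2 * int n \<and> even (x - t - b)}"

definition toward_zero :: "nat \<Rightarrow> int \<Rightarrow> int" where
  "toward_zero n x = (if 1 \<le> x \<and> x \<le> int n then -1 else 1)"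

definition cyc_dist :: "nat \<Rightarrow> int \<Rightarrow> int" where
  "cyc_dist n z = (if z \<le> int n then z else 2 * int n - z)"

lemma parity_slice_nonempty:
  assumes "n \<ge> 1"
  shows "parity_slice n b t \<noteq> {}"
proof -
  have "(if even (t + b) then 0 else 1) \<in> parity_slice n b t"
    using assms unfolding parity_slice_def by auto
  then show ?thesis by blast
qed

lemma parity_slice_step:
  assumes "n \<ge> 1" and "e \<in> {-1, 1}" and "x \<in> parity_slice n b t"
  shows "(x + e) mod (2 * int n) \<in> parity_slice n b (t + 1)"
proof -
  have "(x + e) mod (2 * int n) - (t + 1) - b =
      (x - t - b) + (e - 1) - 2 * (int n * ((x + e) div (2 * int n)))"
    using minus_mod_eq_mult_div[of "x + e" "2 * int n"] by (simp add: algebra_simps)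
  moreover have "even (x - t - b)" "even (e - 1)"
    using assms(2,3) unfolding parity_slice_def by auto
  ultimately have "even ((x + e) mod (2 * int n) - (t + 1) - b)" by simp
  then show ?thesis using assms(1) unfolding parity_slice_def by simp
qed

lemma toward_zero_step:
  assumes "n \<ge> 1" and "0 \<le> z" "z < 2 * int n"
  defines "z' \<equiv> (z + toward_zero n z) mod (2 * int n)"
  shows "cyc_dist n z' \<le> max (cyc_dist n z - 1) 1" and "cyc_dist n z \<le> 1 \<Longrightarrow> z' \<in> {0, 1}"
proof -
  have "z = 0 \<and> z' = 1 \<or> 1 \<le> z \<and> z \<le> int n \<and> z' = z - 1 \<or>
      int n < z \<and> z < 2 * int n - 1 \<and> z' = z + 1 \<or> z = 2 * int n - 1 \<and> int n < z \<and> z' = 0"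
  proof -
    consider "z = 0" | "1 \<le> z \<and> z \<le> int n" | "int n < z \<and> z < 2 * int n - 1"
      | "z = 2 * int n - 1 \<and> int n < z"
      using assms by linarith
    then show ?thesis
      using assms unfolding z'_def toward_zero_def by cases (simp_all add: mod_pos_pos_trivial)
  qed
  then show "cyc_dist n z' \<le> max (cyc_dist n z - 1) 1" and "cyc_dist n z \<le> 1 \<Longrightarrow> z' \<in> {0, 1}"
    unfolding cyc_dist_def by auto
qed

lemma coalesces_toward_zero:
  assumes n: "n \<ge> 1"
    and steps: "\<And>k x. k \<le> n \<Longrightarrow> x \<in> parity_slice n b (s + int k) \<Longrightarrow>
      g (s + int k) x = (x + toward_zero n x) mod (2 * int n)"
  shows "coalesces g (parity_slice n b) s (Suc n)"
proof -
  have toward_zero_pm: "toward_zero n x \<in> {-1, 1}" for x unfolding toward_zero_def by simp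
  have contract: "flow g s k x \<in> parity_slice n b (s + int k) \<and>
      cyc_dist n (flow g s k x) \<le> max (int n - int k) 1"
    if "k \<le> Suc n" "x \<in> parity_slice n b s" for k x
    using that(1)
  proof (induction k)
    case 0
    then show ?case using that(2) unfolding parity_slice_def cyc_dist_def by auto
  next
    case (Suc k)
    let ?z = "flow g s k x"
    have IH: "?z \<in> parity_slice n b (s + int k)" "cyc_dist n ?z \<le> max (int n - int k) 1"
      using Suc by auto
    have step: "flow g s (Suc k) x = (?z + toward_zero n ?z) mod (2 * int n)"
      using steps[OF _ IH(1)] Suc.prems by simp
    have "0 \<le> ?z" "?z < 2 * int n" using IH(1) unfolding parity_slice_def by auto
    then have "cyc_dist n (flow g s (Suc k) x) \<le> max (cyc_dist n ?z - 1) 1"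
      using toward_zero_step(1)[OF n] step by simp
    then have "cyc_dist n (flow g s (Suc k) x) \<le> max (int n - int (Suc k)) 1"
      using IH(2) by (simp add: max_def split: if_splits)
    moreover have "flow g s (Suc k) x \<in> parity_slice n b (s + int (Suc k))"
      using parity_slice_step[OF n toward_zero_pm[of ?z] IH(1)] step by (simp add: ac_simps)
    ultimately show ?case by blast
  qed
  have end_in_01: "flow g s (Suc n) x \<in> {0, 1} \<inter> parity_slice n b (s + int (Suc n))"
    if "x \<in> parity_slice n b s" for x
  proof -
    let ?z = "flow g s n x"
    have z: "?z \<in> parity_slice n b (s + int n)" "cyc_dist n ?z \<le> 1"
      using contract[OF _ that, of n] by auto
    then have "0 \<le> ?z" "?z < 2 * int n" unfolding parity_slice_def by auto
    then show ?thesis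
      using steps[OF le_refl z(1)] toward_zero_step(2)[OF n _ _ z(2)] contract[OF le_refl that]
      by simp
  qed
  show ?thesis
    unfolding coalesces_def
  proof (intro ballI)
    fix x y assume "x \<in> parity_slice n b s" "y \<in> parity_slice n b s"
    from end_in_01[OF this(1)] end_in_01[OF this(2)]
    show "flow g s (Suc n) x = flow g s (Suc n) y" unfolding parity_slice_def by auto
  qed
qed

section \<open>Sign patterns in the environment\<close>

lemma (in prob_space) AE_not_all_indep_events:
  fixes P :: "nat \<Rightarrow> 'a \<Rightarrow> bool"
  assumes indep: "indep_events (\<lambda>j. {x \<in> space M. P j x}) UNIV"
    and bound: "\<And>j. prob {x \<in> space M. P j x} \<le> r" and "r < 1"
  shows "AE x in M. \<exists>j. \<not> P j x"
proof -
  let ?F = "\<lambda>j. {x \<in> space M. P j x}"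
  have F: "?F j \<in> events" for j using indep by (auto simp: indep_events_def)
  have "0 \<le> r" using bound[of 0] measure_nonneg order_trans by blast
  have "prob (\<Inter>j. ?F j) \<le> r ^ k" if "k > 0" for k
  proof -
    have "prob (\<Inter>j. ?F j) \<le> prob (\<Inter>j<k. ?F j)"
      using F \<open>k > 0\<close> by (intro finite_measure_mono) auto
    also have "\<dots> = (\<Prod>j<k. prob (?F j))"
      using indep \<open>k > 0\<close> unfolding indep_events_def by (auto simp: lessThan_empty_iff)
    also have "\<dots> \<le> r ^ k"
      using prod_mono[of "{..<k}" "\<lambda>j. prob (?F j)" "\<lambda>_. r"] bound by simp
    finally show ?thesis .
  qed
  then have "prob (\<Inter>j. ?F j) \<le> 0"
    using LIMSEQ_power_zero[of r] \<open>0 \<le> r\<close> \<open>r < 1\<close>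
    by (intro LIMSEQ_le_const[of "\<lambda>k. r ^ k"]) (auto intro: exI[of _ 1])
  then have "(\<Inter>j. ?F j) \<in> null_sets M"
    using F by (auto simp: emeasure_eq_measure measure_le_0_iff)
  then show ?thesis by (rule AE_I') auto
qed

lemma (in product_prob_space) indep_vars_components:
  assumes "I \<noteq> {}"
  shows "P.indep_vars M (\<lambda>i x. x i) I"
proof (subst P.indep_vars_iff_distr_eq_PiM')
  have "distr (PiM I M) (PiM I M) (\<lambda>x. \<lambda>i\<in>I. x i) = distr (PiM I M) (PiM I M) (\<lambda>x. x)"
    by (rule distr_cong) (auto simp: space_PiM)
  also have "\<dots> = PiM I (\<lambda>i. distr (PiM I M) (M i) (\<lambda>x. x i))"
    by (auto intro: PiM_cong simp: PiM_component)
  finally show "distr (PiM I M) (PiM I M) (\<lambda>x. \<lambda>i\<in>I. x i) = PiM I (\<lambda>i. distr (PiM I M) (M i) (\<lambda>x. x i))" .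
qed (use assms in auto)

lemma AE_xi_sign: "AE \<xi> in xi_space n. \<forall>w\<in>cyl_up n. \<xi> w \<in> {-1, 1}"
proof -
  have "AE \<xi> in xi_space n. \<xi> w \<in> {-1, 1}" if "w \<in> cyl_up n" for w
    unfolding xi_space_def using that
    by (intro AE_PiM_component) (auto simp: measure_pmf.prob_space_axioms AE_measure_pmf_iff)
  then show ?thesis unfolding Ball_def by (subst AE_all_countable) auto
qed

definition block :: "nat \<Rightarrow> int \<Rightarrow> (int \<times> int) set" where
  "block n a = {(x, r) \<in> cyl_up n. a \<le> r \<and> r \<le> a + int n}"

lemma block_subset: "block n a \<subseteq> {0..<2 * int n} \<times> {a..a + int n}"
  unfolding block_def cyl_up_def by auto

lemma finite_block: "finite (block n a)"
  by (rule finite_subset[OF block_subset]) auto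

lemma card_block_le: "card (block n a) \<le> nat (2 * int n) * nat (int n + 1)"
  using card_mono[OF _ block_subset, of n a] by (simp add: card_cartesian_product)

text \<open>Blocks whose time ranges are more than \<open>n\<close> apart are disjoint, so the events that \<open>\<xi>\<close>
  misses the pattern on them are independent, each of probability at most \<open>1 - 2 ^ (-2n(n + 1))\<close>.\<close>

lemma AE_pattern_on_some_block:
  fixes a :: "nat \<Rightarrow> int" and c :: "int \<times> int \<Rightarrow> int"
  assumes n: "n \<ge> 1" and c: "\<And>w. c w \<in> {-1, 1}"
    and spaced: "\<And>j j'. j \<noteq> j' \<Longrightarrow> \<bar>a j - a j'\<bar> > int n"
  shows "AE \<xi> in xi_space n. \<exists>j. \<forall>w\<in>block n (a j). \<xi> w = c w"
proof -
  define Q where "Q = measure_pmf (pmf_of_set {-1, 1 :: int})"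
  define I where "I = cyl_up n"
  define B where "B j = block n (a j)" for j
  interpret product_prob_space "\<lambda>_. Q" I
    by (intro product_prob_spaceI) (simp add: Q_def measure_pmf.prob_space_axioms)
  have space_eq: "xi_space n = PiM I (\<lambda>_. Q)" unfolding xi_space_def Q_def I_def ..
  have BI: "B j \<subseteq> I" for j unfolding B_def I_def block_def by auto
  have disjoint: "disjoint_family B"
    unfolding disjoint_family_on_def B_def block_def using spaced by fastforce
  have "(0, 0) \<in> I" unfolding I_def cyl_up_def using n by simp
  then have "I \<noteq> {}" by blast
  then have "P.indep_vars (\<lambda>j. PiM (B j) (\<lambda>_. Q)) (\<lambda>j \<xi>. restrict (\<lambda>w. \<xi> w) (B j)) UNIV"
    using BI disjoint by (intro P.indep_vars_restrict[OF indep_vars_components]) auto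
  then have indep: "P.indep_events (\<lambda>j. {\<xi> \<in> space (PiM I (\<lambda>_. Q)).
      \<not> (\<forall>w\<in>B j. restrict (\<lambda>w. \<xi> w) (B j) w = c w)}) UNIV"
    by (rule P.indep_eventsI_indep_vars) (simp add: Q_def)
  let ?E = "\<lambda>j. prod_emb I (\<lambda>_. Q) (B j) (PiE (B j) (\<lambda>w. {c w}))"
  have bound: "prob {\<xi> \<in> space (PiM I (\<lambda>_. Q)). \<not> (\<forall>w\<in>B j. restrict (\<lambda>w. \<xi> w) (B j) w = c w)}
      \<le> 1 - (1/2) ^ (nat (2 * int n) * nat (int n + 1))" for j
  proof -
    have "{\<xi> \<in> space (PiM I (\<lambda>_. Q)). \<not> (\<forall>w\<in>B j. restrict (\<lambda>w. \<xi> w) (B j) w = c w)} =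
        space (PiM I (\<lambda>_. Q)) - ?E j"
      unfolding prod_emb_def by (auto simp: space_PiM Q_def)
    moreover have "?E j \<in> sets (PiM I (\<lambda>_. Q))"
      using BI finite_block by (intro sets_PiM_I) (auto simp: B_def Q_def)
    moreover have "prob (?E j) = (\<Prod>w\<in>B j. measure Q {c w})"
      using BI finite_block by (intro measure_PiM_emb) (auto simp: B_def Q_def)
    moreover have "(\<Prod>w\<in>B j. measure Q {c w}) = (1/2) ^ card (B j)"
      using c by (simp add: Q_def measure_pmf_single)
    moreover have "(1/2::real) ^ (nat (2 * int n) * nat (int n + 1)) \<le> (1/2) ^ card (B j)"
      unfolding B_def by (intro power_decreasing card_block_le) auto
    ultimately show ?thesis by (simp add: P.prob_compl)
  qed
  have "AE \<xi> in PiM I (\<lambda>_. Q). \<exists>j. \<not> \<not> (\<forall>w\<in>B j. restrict (\<lambda>w. \<xi> w) (B j) w = c w)"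
    by (rule P.AE_not_all_indep_events[OF indep bound]) simp
  then show ?thesis unfolding space_eq B_def by simp
qed

lemma AE_pattern_on_blocks_along:
  fixes c :: "int \<times> int \<Rightarrow> int" and \<sigma> :: int
  assumes "n \<ge> 1" and "\<And>w. c w \<in> {-1, 1}" and "\<sigma> \<in> {-1, 1}"
  shows "AE \<xi> in xi_space n. \<forall>t. \<exists>j. \<forall>w\<in>block n (t + \<sigma> * int j * int (Suc n)). \<xi> w = c w"
proof (subst AE_all_countable, intro allI AE_pattern_on_some_block[OF assms(1,2)])
  fix t and j j' :: nat assume "j \<noteq> j'"
  have "int n < 1 * int (Suc n)" by simp
  also have "\<dots> \<le> \<bar>int j - int j'\<bar> * int (Suc n)"
    using \<open>j \<noteq> j'\<close> by (intro mult_right_mono) auto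
  finally have "int n < \<bar>int j - int j'\<bar> * int (Suc n)" .
  moreover have "t + \<sigma> * int j * int (Suc n) - (t + \<sigma> * int j' * int (Suc n)) =
      \<sigma> * ((int j - int j') * int (Suc n))"
    by (simp add: algebra_simps)
  moreover have "\<bar>\<sigma>\<bar> = 1" using assms(3) by auto
  ultimately show "int n < \<bar>t + \<sigma> * int j * int (Suc n) - (t + \<sigma> * int j' * int (Suc n))\<bar>"
    by (simp add: abs_mult)
qed

lemma AE_pattern_on_earlier_blocks:
  fixes c :: "int \<times> int \<Rightarrow> int"
  assumes "n \<ge> 1" and "\<And>w. c w \<in> {-1, 1}"
  shows "AE \<xi> in xi_space n. \<forall>t. \<exists>s\<le>t. \<forall>w\<in>block n s. \<xi> w = c w"
proof -
  have "AE \<xi> in xi_space n. \<forall>t. \<exists>j. \<forall>w\<in>block n (t + - 1 * int j * int (Suc n)). \<xi> w = c w"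
    by (rule AE_pattern_on_blocks_along[OF assms]) simp
  then show ?thesis
  proof eventually_elim
    case (elim \<xi>)
    show ?case
    proof
      fix t
      from elim obtain j where "\<forall>w\<in>block n (t - int j * int (Suc n)). \<xi> w = c w" by auto
      then show "\<exists>s\<le>t. \<forall>w\<in>block n s. \<xi> w = c w" by (intro exI[of _ "t - int j * int (Suc n)"]) auto
    qed
  qed
qed

lemma AE_pattern_on_later_blocks:
  fixes c :: "int \<times> int \<Rightarrow> int"
  assumes "n \<ge> 1" and "\<And>w. c w \<in> {-1, 1}"
  shows "AE \<xi> in xi_space n. \<forall>t. \<exists>s\<ge>t. \<forall>w\<in>block n s. \<xi> w = c w"
proof -
  have "AE \<xi> in xi_space n. \<forall>t. \<exists>j. \<forall>w\<in>block n (t + 1 * int j * int (Suc n)). \<xi> w = c w"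
    by (rule AE_pattern_on_blocks_along[OF assms]) simp
  then show ?thesis
  proof eventually_elim
    case (elim \<xi>)
    show ?case
    proof
      fix t
      from elim obtain j where "\<forall>w\<in>block n (t + int j * int (Suc n)). \<xi> w = c w" by auto
      then show "\<exists>s\<ge>t. \<forall>w\<in>block n s. \<xi> w = c w" by (intro exI[of _ "t + int j * int (Suc n)"]) auto
    qed
  qed
qed

section \<open>Paths of the webs as orbits\<close>

lemma Ex1_reflect_time: "(\<exists>!p. P (\<lambda>t::int. p (- t))) \<longleftrightarrow> (\<exists>!q. P q)"
proof
  assume "\<exists>!p. P (\<lambda>t. p (- t))"
  then obtain p where p: "P (\<lambda>t. p (- t))" and uniq: "\<And>p'. P (\<lambda>t. p' (- t)) \<Longrightarrow> p' = p"
    by auto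
  show "\<exists>!q. P q"
  proof (rule ex1I[of _ "\<lambda>t. p (- t)"])
    fix q assume "P q"
    then have "(\<lambda>s. q (- s)) = p" by (intro uniq) simp
    from fun_cong[OF this] show "q = (\<lambda>t. p (- t))" by (metis minus_minus)
  qed (rule p)
next
  assume "\<exists>!q. P q"
  then obtain q where q: "P q" and uniq: "\<And>q'. P q' \<Longrightarrow> q' = q" by auto
  show "\<exists>!p. P (\<lambda>t. p (- t))"
  proof (rule ex1I[of _ "\<lambda>s. q (- s)"])
    fix p assume "P (\<lambda>t. p (- t))"
    from fun_cong[OF uniq[OF this]] show "p = (\<lambda>s. q (- s))" by (metis minus_minus)
  qed (use q in simp)
qed

lemma sign_mod_cycle:
  assumes "n \<ge> 1" and "e \<in> {-1, 1 :: int}"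
  shows "e mod (2 * int n) \<in> {1, 2 * int n - 1}"
  using assms by (auto simp: zmod_minus1)

definition up_step :: "nat \<Rightarrow> (int \<times> int \<Rightarrow> int) \<Rightarrow> int \<Rightarrow> int \<Rightarrow> int" where
  "up_step n \<xi> t x = (x + \<xi> (x, t)) mod (2 * int n)"

text \<open>The dual web run forwards in reversed time: step \<open>t \<rightarrow> t + 1\<close> here is the dual step
  from time \<open>-t\<close> to time \<open>-t - 1\<close>, which reads \<open>\<xi>\<close> at time \<open>-t - 1\<close>.\<close>

definition down_step :: "nat \<Rightarrow> (int \<times> int \<Rightarrow> int) \<Rightarrow> int \<Rightarrow> int \<Rightarrow> int" where
  "down_step n \<xi> t x = (x - \<xi> (x, - t - 1)) mod (2 * int n)"

lemma up_web_contains_iff_orbit: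
  assumes n: "n \<ge> 1" and sign: "\<forall>w\<in>cyl_up n. \<xi> w \<in> {-1, 1}"
  shows "up_web_contains n \<xi> p \<longleftrightarrow> orbit (parity_slice n 0) (up_step n \<xi>) p"
proof
  assume H: "up_web_contains n \<xi> p"
  have "(p t, t) \<in> cyl_up n" for t
    using H unfolding up_web_contains_def bi_infinite_path_def by blast
  moreover have "((p (t + 1 - 1), t + 1 - 1), (p (t + 1), t + 1)) \<in> web_up_edges n \<xi>" for t
    using H unfolding up_web_contains_def by blast
  ultimately show "orbit (parity_slice n 0) (up_step n \<xi>) p"
    unfolding orbit_def parity_slice_def cyl_up_def web_up_edges_def up_step_def by auto
next
  assume H: "orbit (parity_slice n 0) (up_step n \<xi>) p"
  have cyl: "(p i, i) \<in> cyl_up n" for i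
    using H unfolding orbit_def parity_slice_def cyl_up_def by simp
  have step: "p i = (p (i - 1) + \<xi> (p (i - 1), i - 1)) mod (2 * int n)" for i
    using H[unfolded orbit_def, THEN conjunct2, rule_format, of "i - 1"]
    unfolding up_step_def by simp
  have "(p i - p (i - 1)) mod (2 * int n) = \<xi> (p (i - 1), i - 1) mod (2 * int n)" for i
    by (subst step[of i]) (simp add: mod_diff_left_eq)
  then have "(p i - p (i - 1)) mod (2 * int n) \<in> {1, 2 * int n - 1}" for i
    using sign_mod_cycle[OF n] sign cyl by metis
  moreover have "((p (i - 1), i - 1), (p i, i)) \<in> web_up_edges n \<xi>" for i
    unfolding web_up_edges_def using cyl[of "i - 1"] step[of i] by force
  ultimately show "up_web_contains n \<xi> p"
    unfolding up_web_contains_def bi_infinite_path_def using cyl by blast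
qed

lemma down_web_contains_iff_orbit:
  assumes n: "n \<ge> 1" and sign: "\<forall>w\<in>cyl_up n. \<xi> w \<in> {-1, 1}"
  shows "down_web_contains n \<xi> p \<longleftrightarrow> orbit (parity_slice n 1) (down_step n \<xi>) (\<lambda>t. p (- t))"
proof
  assume H: "down_web_contains n \<xi> p"
  have "(p (- t), - t) \<in> cyl_down n" for t
    using H unfolding down_web_contains_def bi_infinite_path_def by blast
  moreover have "((p (- t), - t), (p (- t - 1), - t - 1)) \<in> web_down_edges n \<xi>" for t
    using H unfolding down_web_contains_def by blast
  ultimately show "orbit (parity_slice n 1) (down_step n \<xi>) (\<lambda>t. p (- t))"
    unfolding orbit_def parity_slice_def cyl_down_def web_down_edges_def down_step_def
    by (auto simp: algebra_simps)
next
  assume H: "orbit (parity_slice n 1) (down_step n \<xi>) (\<lambda>t. p (- t))"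
  have cyl: "(p i, i) \<in> cyl_down n" for i
    using H[unfolded orbit_def, THEN conjunct1, rule_format, of "- i"]
    unfolding parity_slice_def cyl_down_def by simp
  have step: "p (i - 1) = (p i - \<xi> (p i, i - 1)) mod (2 * int n)" for i
    using H[unfolded orbit_def, THEN conjunct2, rule_format, of "- i"]
    unfolding down_step_def by (simp add: algebra_simps)
  have "(p i, i - 1) \<in> cyl_up n" for i
    using cyl[of i] unfolding cyl_down_def cyl_up_def by simp
  moreover have "(p i - p (i - 1)) mod (2 * int n) = \<xi> (p i, i - 1) mod (2 * int n)" for i
    by (subst step[of i]) (simp add: mod_diff_right_eq)
  ultimately have "(p i - p (i - 1)) mod (2 * int n) \<in> {1, 2 * int n - 1}" for i
    using sign_mod_cycle[OF n] sign by metis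
  moreover have "((p i, i), (p (i - 1), i - 1)) \<in> web_down_edges n \<xi>" for i
    unfolding web_down_edges_def using cyl[of i] step[of i] by force
  ultimately show "down_web_contains n \<xi> p"
    unfolding down_web_contains_def bi_infinite_path_def using cyl by blast
qed

lemma ex1_up_web_path:
  assumes n: "n \<ge> 1" and sign: "\<forall>w\<in>cyl_up n. \<xi> w \<in> {-1, 1}"
    and windows: "\<forall>t. \<exists>s\<le>t. \<forall>w\<in>block n s. \<xi> w = toward_zero n (fst w)"
  shows "\<exists>!p. up_web_contains n \<xi> p"
proof -
  have "\<exists>!p. orbit (parity_slice n 0) (up_step n \<xi>) p"
  proof (rule ex1_orbit_if_coalescing)
    fix t x assume x: "x \<in> parity_slice n 0 t"
    then have "\<xi> (x, t) \<in> {-1, 1}" using sign unfolding parity_slice_def cyl_up_def by auto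
    from parity_slice_step[OF n this x] show "up_step n \<xi> t x \<in> parity_slice n 0 (t + 1)"
      unfolding up_step_def .
  next
    show "parity_slice n 0 t \<noteq> {}" for t using parity_slice_nonempty[OF n] .
  next
    fix t
    obtain s where "s \<le> t - int (Suc n)" and pattern: "\<forall>w\<in>block n s. \<xi> w = toward_zero n (fst w)"
      using windows by blast
    have "coalesces (up_step n \<xi>) (parity_slice n 0) s (Suc n)"
    proof (rule coalesces_toward_zero[OF n])
      fix k x assume "k \<le> n" "x \<in> parity_slice n 0 (s + int k)"
      then have "(x, s + int k) \<in> block n s" unfolding block_def parity_slice_def cyl_up_def by auto
      then show "up_step n \<xi> (s + int k) x = (x + toward_zero n x) mod (2 * int n)"
        using pattern unfolding up_step_def by auto
    qed
    then show "\<exists>s k. s + int k \<le> t \<and> coalesces (up_step n \<xi>) (parity_slice n 0) s k"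
      using \<open>s \<le> t - int (Suc n)\<close> by (intro exI[of _ s] exI[of _ "Suc n"]) simp
  qed
  then show ?thesis using up_web_contains_iff_orbit[OF n sign] by simp
qed

lemma ex1_down_web_path:
  assumes n: "n \<ge> 1" and sign: "\<forall>w\<in>cyl_up n. \<xi> w \<in> {-1, 1}"
    and windows: "\<forall>t. \<exists>s\<ge>t. \<forall>w\<in>block n s. \<xi> w = - toward_zero n (fst w)"
  shows "\<exists>!p. down_web_contains n \<xi> p"
proof -
  have "\<exists>!q. orbit (parity_slice n 1) (down_step n \<xi>) q"
  proof (rule ex1_orbit_if_coalescing)
    fix t x assume x: "x \<in> parity_slice n 1 t"
    then have "(x, - t - 1) \<in> cyl_up n" unfolding parity_slice_def cyl_up_def by simp
    then have "- \<xi> (x, - t - 1) \<in> {-1, 1}" using sign by auto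
    from parity_slice_step[OF n this x] show "down_step n \<xi> t x \<in> parity_slice n 1 (t + 1)" unfolding down_step_def by simp
  next
    show "parity_slice n 1 t \<noteq> {}" for t using parity_slice_nonempty[OF n] .
  next
    fix t
    obtain s' where "- t \<le> s'" and pattern: "\<forall>w\<in>block n s'. \<xi> w = - toward_zero n (fst w)"
      using windows by blast
    define s where "s = - s' - int (Suc n)"
    have "coalesces (down_step n \<xi>) (parity_slice n 1) s (Suc n)"
    proof (rule coalesces_toward_zero[OF n])
      fix k x assume "k \<le> n" "x \<in> parity_slice n 1 (s + int k)"
      then have "(x, - (s + int k) - 1) \<in> block n s'"
        unfolding block_def parity_slice_def cyl_up_def s_def by auto
      then show "down_step n \<xi> (s + int k) x = (x + toward_zero n x) mod (2 * int n)"
        using pattern unfolding down_step_def by auto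
    qed
    moreover have "s + int (Suc n) \<le> t" using \<open>- t \<le> s'\<close> unfolding s_def by simp
    ultimately show "\<exists>s k. s + int k \<le> t \<and> coalesces (down_step n \<xi>) (parity_slice n 1) s k"
      by blast
  qed
  then show ?thesis
    unfolding down_web_contains_iff_orbit[OF n sign] Ex1_reflect_time .
qed

theorem proposition3p2:
  fixes n :: nat
  assumes "n \<ge> 1"
  shows "AE \<xi> in xi_space n.
           (\<exists>!p. up_web_contains n \<xi> p) \<and> (\<exists>!p. down_web_contains n \<xi> p)"
proof -
  have toward_zero_sign: "toward_zero n x \<in> {-1, 1}" "- toward_zero n x \<in> {-1, 1}" for x
    unfolding toward_zero_def by auto
  have "AE \<xi> in xi_space n. \<forall>w\<in>cyl_up n. \<xi> w \<in> {-1, 1}"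
    by (rule AE_xi_sign)
  moreover have "AE \<xi> in xi_space n. \<forall>t. \<exists>s\<le>t. \<forall>w\<in>block n s. \<xi> w = toward_zero n (fst w)"
    using assms toward_zero_sign(1) by (rule AE_pattern_on_earlier_blocks)
  moreover have "AE \<xi> in xi_space n. \<forall>t. \<exists>s\<ge>t. \<forall>w\<in>block n s. \<xi> w = - toward_zero n (fst w)"
    using assms toward_zero_sign(2) by (rule AE_pattern_on_later_blocks)
  ultimately show ?thesis
    by eventually_elim (use assms ex1_up_web_path ex1_down_web_path in blast)
qed

end
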